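(* Let $\mathfrak g=\bigoplus_{i=1}^{r}\mathfrak g_i$ be a Lie algebra decomposed as a direct sum of ideals, and let $k\ge1$. For each $i$, let $\mathcal{L}\mathrm{Der}_k(\mathfrak g_i,\mathfrak g_i)$ be the set of linear maps $f:\mathfrak g\to\mathfrak g$ with $f(\mathfrak g_l)=0$ for $l\ne i$, $f(\mathfrak g_i)\subseteq\mathfrak g_i$ and $f|_{\mathfrak g_i}\in\mathcal{L}\mathrm{Der}_k(\mathfrak g_i)$. For $i\ne j$, let $\mathcal{L}\mathrm{Der}_k(\mathfrak g_i,\mathfrak g_j)$ be the set of linear maps $f:\mathfrak g\to\mathfrak g$ such that $f(\mathfrak g_l)=0$ for all $l\ne i$, $f(\mathfrak g)\subseteq\mathfrak g_j$, $f([y_1,\dots,y_{k+1}])=0$ for all $y_1,\dots,y_{k+1}\in\mathfrak g_i$, and for every position $s\in\{1,\dots,k+1\}$ one has $[z_1,\dots,z_{s-1},f(y),z_{s+1},\dots,z_{k+1}]=0$ for all $y\in\mathfrak g_i$ and all $z_t\in\mathfrak g_j$. Then $$\mathcal{L}\mathrm{Der}_k(\mathfrak g)=\sum_{i,j}\mathcal{L}\mathrm{Der}_k(\mathfrak g_i,\mathfrak g_j).$$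
   Context: All Lie algebras are finite-dimensional over an algebraically closed field $\mathbb F$ of characteristic zero. For a Lie algebra $\mathfrak g$, an integer $k\ge1$ and $x_1,\dots,x_{k+1}\in\mathfrak g$, write $[x_1,\dots,x_{k+1}]$ for the right-nested bracket $[x_1,[x_2,[\dots,[x_k,x_{k+1}]\dots]]]$. A Leibniz-derivation of order $k$ of $\mathfrak g$ is a linear map $P:\mathfrak g\to\mathfrak g$ such that $P([x_1,\dots,x_{k+1}])=\sum_{i=1}^{k+1}[x_1,\dots,x_{i-1},P(x_i),x_{i+1},\dots,x_{k+1}]$ for all $x_1,\dots,x_{k+1}\in\mathfrak g$; the set of these is denoted $\mathcal{L}\mathrm{Der}_k(\mathfrak g)$. *)

theory Defs
  imports "HOL-Computational_Algebra.Polynomial"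
begin

definition alg_closed :: "('k::field) itself \<Rightarrow> bool" where
  "alg_closed _ \<longleftrightarrow> (\<forall>p :: 'k poly. degree p > 0 \<longrightarrow> (\<exists>x. poly p x = 0))"

definition fin_dim_vs :: "('k::field \<Rightarrow> 'v::ab_group_add \<Rightarrow> 'v) \<Rightarrow> bool" where
  "fin_dim_vs scale \<longleftrightarrow> vector_space scale \<and>
     (\<exists>B. finite B \<and> module.span scale B = UNIV)"

definition lie_algebra :: "('k::field \<Rightarrow> 'v::ab_group_add \<Rightarrow> 'v) \<Rightarrow> ('v \<Rightarrow> 'v \<Rightarrow> 'v) \<Rightarrow> bool" where
  "lie_algebra scale br \<longleftrightarrow> vector_space scale \<and>
     (\<forall>x. Vector_Spaces.linear scale scale (br x)) \<and>
     (\<forall>y. Vector_Spaces.linear scale scale (\<lambda>x. br x y)) \<and>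
     (\<forall>x. br x x = 0) \<and>
     (\<forall>x y z. br x (br y z) + br y (br z x) + br z (br x y) = 0)"

text \<open>Right-nested bracket [x1,[x2,[...,[xk,x(k+1)]...]]] of a nonempty list.\<close>
fun rnest :: "('v::zero \<Rightarrow> 'v \<Rightarrow> 'v) \<Rightarrow> 'v list \<Rightarrow> 'v" where
  "rnest br [] = 0"
| "rnest br [x] = x"
| "rnest br (x # y # xs) = br x (rnest br (y # xs))"

definition leibniz_rule :: "('v::comm_monoid_add \<Rightarrow> 'v \<Rightarrow> 'v) \<Rightarrow> nat \<Rightarrow> 'v set \<Rightarrow> ('v \<Rightarrow> 'v) \<Rightarrow> bool" where
  "leibniz_rule br k S P \<longleftrightarrow>
     (\<forall>xs. length xs = k + 1 \<and> set xs \<subseteq> S \<longrightarrow>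
        P (rnest br xs) = (\<Sum>i<k+1. rnest br (xs[i := P (xs ! i)])))"

definition LDer :: "('k::field \<Rightarrow> 'v::ab_group_add \<Rightarrow> 'v) \<Rightarrow> ('v \<Rightarrow> 'v \<Rightarrow> 'v) \<Rightarrow> nat \<Rightarrow> ('v \<Rightarrow> 'v) set" where
  "LDer scale br k = {P. Vector_Spaces.linear scale scale P \<and> leibniz_rule br k UNIV P}"

definition LDer_pair :: "('k::field \<Rightarrow> 'v::ab_group_add \<Rightarrow> 'v) \<Rightarrow> ('v \<Rightarrow> 'v \<Rightarrow> 'v) \<Rightarrow>
    (nat \<Rightarrow> 'v set) \<Rightarrow> nat \<Rightarrow> nat \<Rightarrow> nat \<Rightarrow> nat \<Rightarrow> ('v \<Rightarrow> 'v) set" where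
  "LDer_pair scale br G r k i j =
    (if i = j then
       {f. Vector_Spaces.linear scale scale f
           \<and> (\<forall>l\<in>{1..r} - {i}. \<forall>x\<in>G l. f x = 0)
           \<and> f ` G i \<subseteq> G i
           \<and> leibniz_rule br k (G i) f}
     else
       {f. Vector_Spaces.linear scale scale f
           \<and> (\<forall>l\<in>{1..r} - {i}. \<forall>x\<in>G l. f x = 0)
           \<and> range f \<subseteq> G j
           \<and> (\<forall>ys. length ys = k + 1 \<and> set ys \<subseteq> G i \<longrightarrow> f (rnest br ys) = 0)
           \<and> (\<forall>s<k+1. \<forall>y\<in>G i. \<forall>zs. length zs = k + 1 \<and> set zs \<subseteq> G j \<longrightarrow>
                 rnest br (zs[s := f y]) = 0)})"

end

theory Submission
  imports Defs
begin

(* Let pi_i denote the projection of g onto g_i along the other summands.  Since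
   the g_i are ideals with pairwise trivial intersection, each pi_i is a Lie
   algebra homomorphism, and a right-nested bracket lies in g_i as soon as one of
   its entries does (so it vanishes if it has entries in two different g_i).

   - every P in LDer_k(g) is the sum of its blocks pi_j o P o pi_i, and each block
     lies in LDer_k(g_i, g_j) (diagonal: project the Leibniz rule to g_i;
     off-diagonal: the required identities follow from the vanishing of brackets
     with entries in two different ideals, using k >= 1);
   - conversely every element of LDer_k(g_i, g_j) is a Leibniz-derivation of g,
     and LDer_k(g) is closed under finite sums. *)

lemma nth_mem_list_update: "s < length xs \<Longrightarrow> s \<noteq> t \<Longrightarrow> xs ! s \<in> set (xs[t := v])"
  by (metis length_list_update nth_list_update_neq nth_mem)

lemma other_position:
  assumes "k \<ge> 1" "s < k + 1"
  obtains s' :: nat where "s' < k + 1" "s' \<noteq> s"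
  using assms that[of "if s = 0 then 1 else 0"] by auto

lemma rnest_induct [case_names Nil Single Cons]:
  fixes P :: "'v::zero list \<Rightarrow> bool"
  assumes "P []" "\<And>x. P [x]" "\<And>x y xs. P (y # xs) \<Longrightarrow> P (x # y # xs)"
  shows "P xs"
  using assms by (induction "undefined :: 'v \<Rightarrow> 'v \<Rightarrow> 'v" xs rule: rnest.induct) auto

locale bilinear_bracket = vector_space scale
  for scale :: "'k::field \<Rightarrow> 'v::ab_group_add \<Rightarrow> 'v" +
  fixes br :: "'v \<Rightarrow> 'v \<Rightarrow> 'v"
  assumes linear_right: "\<And>x. Vector_Spaces.linear scale scale (br x)"
    and linear_left: "\<And>y. Vector_Spaces.linear scale scale (\<lambda>x. br x y)"
begin

lemma linear_sum:
  "Vector_Spaces.linear scale scale f \<Longrightarrow> f (sum g A) = (\<Sum>a\<in>A. f (g a))"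
  by (rule module_hom.sum[OF module_hom_linearI])

lemma linear_map_zero: "Vector_Spaces.linear scale scale f \<Longrightarrow> f 0 = 0"
  by (rule module_hom.zero[OF module_hom_linearI])

lemma br_sum_left: "br (sum f A) y = (\<Sum>a\<in>A. br (f a) y)"
  using linear_sum[OF linear_left] .

lemma br_sum_right: "br x (sum f A) = (\<Sum>a\<in>A. br x (f a))"
  using linear_sum[OF linear_right] .

lemma br_add_left: "br (x + y) z = br x z + br y z"
  by (rule module_hom.add[OF module_hom_linearI[OF linear_left]])

lemma br_add_right: "br x (y + z) = br x y + br x z"
  by (rule module_hom.add[OF module_hom_linearI[OF linear_right]])

lemma rnest_Cons: "xs \<noteq> [] \<Longrightarrow> rnest br (x # xs) = br x (rnest br xs)"
  by (cases xs) auto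

lemma rnest_update_sum:
  "t < length xs \<Longrightarrow> rnest br (xs[t := sum h A]) = (\<Sum>a\<in>A. rnest br (xs[t := h a]))"
proof (induction xs arbitrary: t)
  case (Cons x xs)
  show ?case
  proof (cases t)
    case 0
    then show ?thesis
      by (cases xs) (simp_all add: br_sum_left)
  next
    case (Suc t')
    with Cons.prems have "t' < length xs" "xs \<noteq> []" by auto
    then show ?thesis
      using Suc Cons.IH by (simp add: rnest_Cons br_sum_right)
  qed
qed simp

lemma LDer_leibniz:
  "P \<in> LDer scale br k \<Longrightarrow> length xs = k + 1 \<Longrightarrow>
     P (rnest br xs) = (\<Sum>t<k+1. rnest br (xs[t := P (xs ! t)]))"
  unfolding LDer_def leibniz_rule_def by blast

(* By multilinearity of rnest, LDer_k is closed under finite sums. *)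
lemma LDer_sum:
  assumes "finite A" and "\<forall>a\<in>A. g a \<in> LDer scale br k"
  shows "(\<lambda>x. \<Sum>a\<in>A. g a x) \<in> LDer scale br k"
proof -
  have linear: "Vector_Spaces.linear scale scale (\<lambda>x. \<Sum>a\<in>A. g a x)"
    using assms(2) vector_space_pair.linear_compose_sum[of scale scale A g]
    by (simp add: LDer_def vector_space_pair_def vector_space_axioms)
  have "leibniz_rule br k UNIV (\<lambda>x. \<Sum>a\<in>A. g a x)"
    unfolding leibniz_rule_def
  proof (intro allI impI)
    fix xs :: "'v list"
    assume xs: "length xs = k + 1 \<and> set xs \<subseteq> UNIV"
    have "(\<Sum>a\<in>A. g a (rnest br xs)) = (\<Sum>a\<in>A. \<Sum>t<k+1. rnest br (xs[t := g a (xs ! t)]))"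
      using assms(2) xs LDer_leibniz by (intro sum.cong) auto
    also have "\<dots> = (\<Sum>t<k+1. \<Sum>a\<in>A. rnest br (xs[t := g a (xs ! t)]))"
      by (rule sum.swap)
    also have "\<dots> = (\<Sum>t<k+1. rnest br (xs[t := \<Sum>a\<in>A. g a (xs ! t)]))"
      using xs by (intro sum.cong) (simp_all add: rnest_update_sum)
    finally show "(\<Sum>a\<in>A. g a (rnest br xs)) = (\<Sum>t<k+1. rnest br (xs[t := \<Sum>a\<in>A. g a (xs ! t)]))" .
  qed
  with linear show ?thesis
    by (simp add: LDer_def)
qed

end

(* A Lie algebra (only alternation of the bracket is needed) that is the internal
   direct sum of the ideals G 1, ..., G r. *)
locale ideal_decomposition = bilinear_bracket scale br
  for scale :: "'k::field \<Rightarrow> 'v::ab_group_add \<Rightarrow> 'v" and br +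
  fixes G :: "nat \<Rightarrow> 'v set" and r :: nat
  assumes alternating: "\<And>x. br x x = 0"
    and subspace_G: "\<forall>i\<in>{1..r}. subspace (G i)"
    and ideal_G: "\<forall>i\<in>{1..r}. \<forall>x y. y \<in> G i \<longrightarrow> br x y \<in> G i"
    and spanning: "\<forall>x. \<exists>y. (\<forall>i\<in>{1..r}. y i \<in> G i) \<and> x = (\<Sum>i=1..r. y i)"
    and independent: "\<forall>y. (\<forall>i\<in>{1..r}. y i \<in> G i) \<and> (\<Sum>i=1..r. y i) = 0 \<longrightarrow> (\<forall>i\<in>{1..r}. y i = 0)"
begin

lemma antisymmetric: "br x y = - br y x"
proof -
  have "0 = br (x + y) (x + y)"
    by (simp add: alternating)
  also have "\<dots> = br x x + br x y + (br y x + br y y)"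
    by (simp add: br_add_left br_add_right)
  finally show ?thesis
    by (simp add: alternating eq_neg_iff_add_eq_0)
qed

lemma ideal_right: "i \<in> {1..r} \<Longrightarrow> y \<in> G i \<Longrightarrow> br x y \<in> G i"
  using ideal_G by blast

(* The ideals are two-sided, by antisymmetry. *)
lemma ideal_left: "i \<in> {1..r} \<Longrightarrow> x \<in> G i \<Longrightarrow> br x y \<in> G i"
  using antisymmetric[of x y] ideal_right subspace_neg subspace_G by metis

lemma components_unique:
  assumes "\<forall>l\<in>{1..r}. y l \<in> G l" "\<forall>l\<in>{1..r}. z l \<in> G l"
    and "(\<Sum>l=1..r. y l) = (\<Sum>l=1..r. z l)" "i \<in> {1..r}"
  shows "y i = z i"
proof -
  have "\<forall>l\<in>{1..r}. y l - z l \<in> G l"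
    using assms(1,2) subspace_G by (simp add: subspace_diff)
  moreover have "(\<Sum>l=1..r. y l - z l) = 0"
    using assms(3) by (simp only: sum_subtractf diff_self)
  ultimately have "y i - z i = 0"
    using independent[rule_format, of "\<lambda>l. y l - z l"] assms(4) by blast
  then show ?thesis by simp
qed

definition proj :: "nat \<Rightarrow> 'v \<Rightarrow> 'v" where
  "proj i x = (SOME y. (\<forall>l\<in>{1..r}. y l \<in> G l) \<and> x = (\<Sum>l=1..r. y l)) i"

lemma proj_decomposes: "(\<forall>l\<in>{1..r}. proj l x \<in> G l) \<and> x = (\<Sum>l=1..r. proj l x)"
  unfolding proj_def using someI_ex[OF spanning[rule_format, of x]] by blast

lemma proj_in_G: "l \<in> {1..r} \<Longrightarrow> proj l x \<in> G l"
  using proj_decomposes by blast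

lemma sum_proj: "(\<Sum>l=1..r. proj l x) = x"
  using proj_decomposes by metis

lemma proj_eq:
  assumes "\<forall>l\<in>{1..r}. y l \<in> G l" "x = (\<Sum>l=1..r. y l)" "i \<in> {1..r}"
  shows "proj i x = y i"
  using components_unique[of "\<lambda>l. proj l x" y i] assms proj_in_G sum_proj by auto

lemma proj_of_summand:
  assumes "i \<in> {1..r}" "l \<in> {1..r}" "x \<in> G l"
  shows "proj i x = (if i = l then x else 0)"
  using assms subspace_G subspace_0 proj_eq[of "\<lambda>m. if m = l then x else 0" x i]
  by (auto simp: sum.delta)

lemma proj_self: "i \<in> {1..r} \<Longrightarrow> x \<in> G i \<Longrightarrow> proj i x = x"
  using proj_of_summand by simp

lemma proj_other: "i \<in> {1..r} \<Longrightarrow> l \<in> {1..r} \<Longrightarrow> l \<noteq> i \<Longrightarrow> x \<in> G l \<Longrightarrow> proj i x = 0"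
  using proj_of_summand by simp

lemma summands_disjoint:
  "i \<in> {1..r} \<Longrightarrow> j \<in> {1..r} \<Longrightarrow> i \<noteq> j \<Longrightarrow> x \<in> G i \<Longrightarrow> x \<in> G j \<Longrightarrow> x = 0"
  using proj_self proj_other by metis

(* Projections are linear, by uniqueness of components. *)
lemma proj_linear:
  assumes i: "i \<in> {1..r}"
  shows "Vector_Spaces.linear scale scale (proj i)"
  unfolding Vector_Spaces.linear_iff
proof (intro conjI allI vector_space_axioms)
  fix c x y
  have "x + y = (\<Sum>l=1..r. proj l x + proj l y)"
    by (simp only: sum.distrib sum_proj)
  then show "proj i (x + y) = proj i x + proj i y"
    using i proj_in_G subspace_G subspace_add by (intro proj_eq) auto
  have "scale c x = (\<Sum>l=1..r. scale c (proj l x))"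
    by (simp only: scale_sum_right[symmetric] sum_proj)
  then show "proj i (scale c x) = scale c (proj i x)"
    using i proj_in_G subspace_G subspace_scale by (intro proj_eq) auto
qed

(* Each projection is a Lie algebra homomorphism: brackets between different
   summands vanish. *)
lemma proj_br:
  assumes i: "i \<in> {1..r}"
  shows "proj i (br x y) = br (proj i x) (proj i y)"
proof -
  have "br x y = (\<Sum>l=1..r. br (proj l x) y)"
    using br_sum_left[of "\<lambda>l. proj l x" "{1..r}" y] unfolding sum_proj .
  moreover have "\<forall>l\<in>{1..r}. br (proj l x) y \<in> G l"
    using ideal_left proj_in_G by blast
  ultimately have "proj i (br x y) = br (proj i x) y"
    using proj_eq[OF _ _ i, of "\<lambda>l. br (proj l x) y"] by simp
  also have "\<dots> = (\<Sum>m=1..r. br (proj i x) (proj m y))"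
    using br_sum_right[of "proj i x" "\<lambda>l. proj l y" "{1..r}"] unfolding sum_proj .
  also have "\<dots> = br (proj i x) (proj i y) + (\<Sum>m\<in>{1..r}-{i}. br (proj i x) (proj m y))"
    using i by (simp add: sum.remove)
  also have "(\<Sum>m\<in>{1..r}-{i}. br (proj i x) (proj m y)) = 0"
  proof (intro sum.neutral ballI)
    fix m
    assume m: "m \<in> {1..r} - {i}"
    have "br (proj i x) (proj m y) \<in> G i" "br (proj i x) (proj m y) \<in> G m"
      using i m ideal_left ideal_right proj_in_G by auto
    with i m show "br (proj i x) (proj m y) = 0"
      using summands_disjoint[of i m] by blast
  qed
  finally show ?thesis by simp
qed

lemma proj_rnest: "i \<in> {1..r} \<Longrightarrow> proj i (rnest br xs) = rnest br (map (proj i) xs)"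
  by (induction xs rule: rnest_induct)
     (simp_all add: proj_br proj_self subspace_0 subspace_G)

lemma map_proj_self: "i \<in> {1..r} \<Longrightarrow> set xs \<subseteq> G i \<Longrightarrow> map (proj i) xs = xs"
  using proj_self by (intro map_idI) auto

lemma proj_rnest_self: "i \<in> {1..r} \<Longrightarrow> set xs \<subseteq> G i \<Longrightarrow> proj i (rnest br xs) = rnest br xs"
  using proj_rnest map_proj_self by metis

lemma proj_rnest_update:
  assumes "i \<in> {1..r}" "set xs \<subseteq> G i"
  shows "proj i (rnest br (xs[t := w])) = rnest br (xs[t := proj i w])"
  using proj_rnest[OF assms(1)] map_proj_self[OF assms] by (simp add: map_update)

lemma rnest_in_ideal: "i \<in> {1..r} \<Longrightarrow> w \<in> set xs \<Longrightarrow> w \<in> G i \<Longrightarrow> rnest br xs \<in> G i"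
  by (induction xs rule: rnest_induct) (auto simp: ideal_left ideal_right)

lemma rnest_mixed:
  assumes "i \<in> {1..r}" "j \<in> {1..r}" "i \<noteq> j"
    and "u \<in> set xs" "u \<in> G i" "w \<in> set xs" "w \<in> G j"
  shows "rnest br xs = 0"
  using assms rnest_in_ideal summands_disjoint by metis

lemma rnest_update_component:
  assumes j: "j \<in> {1..r}" and "w \<in> G j" "t < length xs"
  shows "rnest br (xs[t := w]) = rnest br ((map (proj j) xs)[t := w])"
proof -
  have "rnest br (xs[t := w]) \<in> G j"
    using assms by (intro rnest_in_ideal[OF j, of w]) (simp_all add: set_update_memI)
  then have "rnest br (xs[t := w]) = proj j (rnest br (xs[t := w]))"
    using proj_self[OF j] by simp
  also have "\<dots> = rnest br ((map (proj j) xs)[t := w])"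
    using assms proj_rnest[OF j] proj_self[OF j] by (simp add: map_update)
  finally show ?thesis .
qed

lemma factor_through_proj:
  assumes f: "Vector_Spaces.linear scale scale f" and i: "i \<in> {1..r}"
    and vanish: "\<forall>l\<in>{1..r}-{i}. \<forall>x\<in>G l. f x = 0"
  shows "f x = f (proj i x)"
proof -
  have "f x = (\<Sum>l=1..r. f (proj l x))"
    using linear_sum[OF f, of "\<lambda>l. proj l x" "{1..r}"] unfolding sum_proj .
  also have "\<dots> = f (proj i x) + (\<Sum>l\<in>{1..r}-{i}. f (proj l x))"
    using i by (simp add: sum.remove)
  also have "(\<Sum>l\<in>{1..r}-{i}. f (proj l x)) = 0"
    using vanish proj_in_G by (intro sum.neutral) auto
  finally show ?thesis by simp
qed

lemma LDer_from_components:
  assumes f: "Vector_Spaces.linear scale scale f" and i: "i \<in> {1..r}" and j: "j \<in> {1..r}"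
    and vanish: "\<forall>l\<in>{1..r}-{i}. \<forall>x\<in>G l. f x = 0"
    and range: "range f \<subseteq> G j"
    and components: "\<And>xs. length xs = k + 1 \<Longrightarrow>
       f (rnest br (map (proj i) xs)) =
       (\<Sum>t<k+1. rnest br ((map (proj j) xs)[t := f (proj i (xs ! t))]))"
  shows "f \<in> LDer scale br k"
proof -
  have "leibniz_rule br k UNIV f"
    unfolding leibniz_rule_def
  proof (intro allI impI)
    fix xs :: "'v list"
    assume xs: "length xs = k + 1 \<and> set xs \<subseteq> UNIV"
    have "f (rnest br xs) = f (rnest br (map (proj i) xs))"
      using factor_through_proj[OF f i vanish] proj_rnest[OF i] by metis
    also have "\<dots> = (\<Sum>t<k+1. rnest br ((map (proj j) xs)[t := f (proj i (xs ! t))]))"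
      using components xs by blast
    also have "\<dots> = (\<Sum>t<k+1. rnest br (xs[t := f (xs ! t)]))"
    proof (rule sum.cong[OF refl])
      fix t
      assume "t \<in> {..<k+1}"
      then have "rnest br (xs[t := f (xs ! t)]) = rnest br ((map (proj j) xs)[t := f (xs ! t)])"
        using xs range by (intro rnest_update_component[OF j]) auto
      then show "rnest br ((map (proj j) xs)[t := f (proj i (xs ! t))]) = rnest br (xs[t := f (xs ! t)])"
        using factor_through_proj[OF f i vanish] by simp
    qed
    finally show "f (rnest br xs) = (\<Sum>t<k+1. rnest br (xs[t := f (xs ! t)]))" .
  qed
  with f show ?thesis
    by (simp add: LDer_def)
qed

lemma LDer_pair_in_LDer:
  assumes i: "i \<in> {1..r}" and j: "j \<in> {1..r}"
    and f: "f \<in> LDer_pair scale br G r k i j"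
  shows "f \<in> LDer scale br k"
proof (cases "i = j")
  case True
  then have linear: "Vector_Spaces.linear scale scale f"
    and vanish: "\<forall>l\<in>{1..r}-{i}. \<forall>x\<in>G l. f x = 0"
    and image: "f ` G i \<subseteq> G i" and leibniz: "leibniz_rule br k (G i) f"
    using f by (auto simp: LDer_pair_def)
  have "range f \<subseteq> G i"
    using image proj_in_G[OF i] factor_through_proj[OF linear i vanish] by auto
  moreover have "f (rnest br (map (proj i) xs)) =
      (\<Sum>t<k+1. rnest br ((map (proj i) xs)[t := f (proj i (xs ! t))]))"
    if xs: "length xs = k + 1" for xs
  proof -
    let ?ys = "map (proj i) xs"
    have "length ?ys = k + 1" "set ?ys \<subseteq> G i"
      using xs proj_in_G[OF i] by auto
    then have "f (rnest br ?ys) = (\<Sum>t<k+1. rnest br (?ys[t := f (?ys ! t)]))"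
      using leibniz unfolding leibniz_rule_def by blast
    also have "\<dots> = (\<Sum>t<k+1. rnest br (?ys[t := f (proj i (xs ! t))]))"
      by (rule sum.cong[OF refl]) (simp add: xs)
    finally show ?thesis .
  qed
  ultimately show ?thesis
    using True by (intro LDer_from_components[OF linear i j vanish]) simp_all
next
  case False
  then have linear: "Vector_Spaces.linear scale scale f"
    and vanish: "\<forall>l\<in>{1..r}-{i}. \<forall>x\<in>G l. f x = 0"
    and range: "range f \<subseteq> G j"
    and kills: "\<forall>ys. length ys = k + 1 \<and> set ys \<subseteq> G i \<longrightarrow> f (rnest br ys) = 0"
    and annihilated: "\<forall>s<k+1. \<forall>y\<in>G i. \<forall>zs. length zs = k + 1 \<and> set zs \<subseteq> G j \<longrightarrow>
                 rnest br (zs[s := f y]) = 0"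
    using f by (auto simp: LDer_pair_def)
  have "f (rnest br (map (proj i) xs)) =
      (\<Sum>t<k+1. rnest br ((map (proj j) xs)[t := f (proj i (xs ! t))]))"
    if xs: "length xs = k + 1" for xs
  proof -
    have "length (map (proj i) xs) = k + 1" "set (map (proj i) xs) \<subseteq> G i"
      using xs proj_in_G[OF i] by auto
    then have "f (rnest br (map (proj i) xs)) = 0"
      using kills by blast
    moreover have "rnest br ((map (proj j) xs)[t := f (proj i (xs ! t))]) = 0" if t: "t < k + 1" for t
    proof -
      have "length (map (proj j) xs) = k + 1" "set (map (proj j) xs) \<subseteq> G j"
        using xs proj_in_G[OF j] by auto
      then show ?thesis
        using annihilated t proj_in_G[OF i] by blast
    qed
    ultimately show ?thesis
      by simp
  qed
  then show ?thesis
    by (intro LDer_from_components[OF linear i j vanish range])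
qed

definition block :: "('v \<Rightarrow> 'v) \<Rightarrow> nat \<Rightarrow> nat \<Rightarrow> 'v \<Rightarrow> 'v" where
  "block P i j x = proj j (P (proj i x))"

lemma sum_blocks:
  assumes "Vector_Spaces.linear scale scale P"
  shows "P x = (\<Sum>i=1..r. \<Sum>j=1..r. block P i j x)"
  using linear_sum[OF assms, of "\<lambda>i. proj i x" "{1..r}"]
  by (simp add: block_def sum_proj[unfolded One_nat_def])

lemma block_diagonal_leibniz:
  assumes P: "P \<in> LDer scale br k" and i: "i \<in> {1..r}"
  shows "leibniz_rule br k (G i) (block P i i)"
  unfolding leibniz_rule_def
proof (intro allI impI)
  fix xs :: "'v list"
  assume xs: "length xs = k + 1 \<and> set xs \<subseteq> G i"
  have "block P i i (rnest br xs) = proj i (P (rnest br xs))"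
    using proj_rnest_self[OF i] xs by (simp add: block_def)
  also have "\<dots> = (\<Sum>t<k+1. proj i (rnest br (xs[t := P (xs ! t)])))"
    unfolding LDer_leibniz[OF P conjunct1[OF xs]] by (rule linear_sum[OF proj_linear[OF i]])
  also have "\<dots> = (\<Sum>t<k+1. rnest br (xs[t := block P i i (xs ! t)]))"
  proof (rule sum.cong[OF refl])
    fix t
    assume "t \<in> {..<k+1}"
    then have "xs ! t \<in> G i"
      using xs nth_mem by fastforce
    then have "proj i (xs ! t) = xs ! t"
      by (rule proj_self[OF i])
    then show "proj i (rnest br (xs[t := P (xs ! t)])) = rnest br (xs[t := block P i i (xs ! t)])"
      using xs proj_rnest_update[OF i] by (simp add: block_def)
  qed
  finally show "block P i i (rnest br xs) = (\<Sum>t<k+1. rnest br (xs[t := block P i i (xs ! t)]))" .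
qed

(* Off-diagonal blocks kill brackets of elements of G i: after applying P to one
   entry, another entry (k \<ge> 1) still lies in G i, so the bracket stays in G i. *)
lemma block_offdiagonal_kills_brackets:
  assumes P: "P \<in> LDer scale br k" and k: "k \<ge> 1"
    and i: "i \<in> {1..r}" and j: "j \<in> {1..r}" and "i \<noteq> j"
    and ys: "length ys = k + 1" "set ys \<subseteq> G i"
  shows "block P i j (rnest br ys) = 0"
proof -
  have "block P i j (rnest br ys) = proj j (P (rnest br ys))"
    using proj_rnest_self[OF i ys(2)] by (simp add: block_def)
  also have "\<dots> = (\<Sum>t<k+1. proj j (rnest br (ys[t := P (ys ! t)])))"
    unfolding LDer_leibniz[OF P ys(1)] by (rule linear_sum[OF proj_linear[OF j]])
  also have "\<dots> = 0"
  proof (intro sum.neutral ballI)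
    fix t
    assume "t \<in> {..<k+1}"
    with k obtain s where s: "s < k + 1" "s \<noteq> t"
      using other_position by auto
    then have "ys ! s \<in> set (ys[t := P (ys ! t)])" "ys ! s \<in> G i"
      using ys nth_mem_list_update[of s ys t] nth_mem[of s ys] by auto
    then have "rnest br (ys[t := P (ys ! t)]) \<in> G i"
      by (rule rnest_in_ideal[OF i])
    then show "proj j (rnest br (ys[t := P (ys ! t)])) = 0"
      using proj_other[OF j i] \<open>i \<noteq> j\<close> by blast
  qed
  finally show ?thesis .
qed

(* Off-diagonal blocks are annihilated by brackets with G j: the bracket with the
   entry y \<in> G i in place vanishes, and applying P to it, only the term where P
   hits y survives the projection to G j. *)
lemma block_offdiagonal_annihilated:
  assumes P: "P \<in> LDer scale br k" and k: "k \<ge> 1"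
    and i: "i \<in> {1..r}" and j: "j \<in> {1..r}" and "i \<noteq> j"
    and s: "s < k + 1" and y: "y \<in> G i"
    and zs: "length zs = k + 1" "set zs \<subseteq> G j"
  shows "rnest br (zs[s := block P i j y]) = 0"
proof -
  let ?L = "zs[s := y]"
  have L: "length ?L = k + 1" "?L ! s = y"
    using s zs by simp_all
  obtain s' where s': "s' < k + 1" "s' \<noteq> s"
    using other_position[OF k s] .
  have "zs ! s' \<in> set ?L" "zs ! s' \<in> G j"
    using s' zs nth_mem_list_update[of s' zs s y] nth_mem[of s' zs] by auto
  moreover have "y \<in> set ?L"
    using s zs by (simp add: set_update_memI)
  ultimately have "rnest br ?L = 0"
    using rnest_mixed[OF i j \<open>i \<noteq> j\<close> _ y] by blast
  then have "0 = proj j (P (rnest br ?L))"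
    using P linear_map_zero[OF proj_linear[OF j]] linear_map_zero[of P] by (simp add: LDer_def)
  also have "\<dots> = (\<Sum>t<k+1. proj j (rnest br (?L[t := P (?L ! t)])))"
    unfolding LDer_leibniz[OF P L(1)] by (rule linear_sum[OF proj_linear[OF j]])
  also have "\<dots> = proj j (rnest br (?L[s := P y])) +
      (\<Sum>t\<in>{..<k+1}-{s}. proj j (rnest br (?L[t := P (?L ! t)])))"
    using s by (simp only: sum.remove[OF finite_lessThan] lessThan_iff L(2) list_update_overwrite)
  also have "(\<Sum>t\<in>{..<k+1}-{s}. proj j (rnest br (?L[t := P (?L ! t)]))) = 0"
  proof (intro sum.neutral ballI)
    fix t
    assume "t \<in> {..<k+1} - {s}"
    then have "y \<in> set (?L[t := P (?L ! t)])"
      using s L nth_mem_list_update[of s ?L t] by auto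
    then show "proj j (rnest br (?L[t := P (?L ! t)])) = 0"
      using rnest_in_ideal[OF i _ y] proj_other[OF j i] \<open>i \<noteq> j\<close> by blast
  qed
  also have "proj j (rnest br (?L[s := P y])) = rnest br (zs[s := block P i j y])"
    using proj_rnest_update[OF j zs(2)] proj_self[OF i y] by (simp add: block_def)
  finally show ?thesis by simp
qed

lemma block_in_LDer_pair:
  assumes P: "P \<in> LDer scale br k" and k: "k \<ge> 1"
    and i: "i \<in> {1..r}" and j: "j \<in> {1..r}"
  shows "block P i j \<in> LDer_pair scale br G r k i j"
proof -
  have linear_P: "Vector_Spaces.linear scale scale P"
    using P by (simp add: LDer_def)
  have "block P i j = proj j \<circ> (P \<circ> proj i)"
    by (simp add: fun_eq_iff block_def)
  then have linear: "Vector_Spaces.linear scale scale (block P i j)"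
    using Vector_Spaces.linear_compose proj_linear[OF i] proj_linear[OF j] linear_P by metis
  have vanish: "\<forall>l\<in>{1..r}-{i}. \<forall>x\<in>G l. block P i j x = 0"
    using proj_other[OF i] linear_map_zero[OF linear_P] linear_map_zero[OF proj_linear[OF j]]
    by (auto simp: block_def)
  have range: "range (block P i j) \<subseteq> G j"
    using proj_in_G[OF j] by (auto simp: block_def)
  show ?thesis
  proof (cases "i = j")
    case True
    then show ?thesis
      using linear vanish range block_diagonal_leibniz[OF P i]
      unfolding LDer_pair_def if_P[OF True] by blast
  next
    case False
    then show ?thesis
      using linear vanish range block_offdiagonal_kills_brackets[OF P k i j False]
        block_offdiagonal_annihilated[OF P k i j False]
      unfolding LDer_pair_def if_not_P[OF False] by blast
  qed
qed

theorem LDer_decomposition: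
  assumes k: "k \<ge> 1"
  shows "LDer scale br k =
    {f. \<exists>F. (\<forall>i\<in>{1..r}. \<forall>j\<in>{1..r}. F i j \<in> LDer_pair scale br G r k i j)
           \<and> f = (\<lambda>x. \<Sum>i=1..r. \<Sum>j=1..r. F i j x)}" (is "_ = ?sums")
proof (intro set_eqI iffI)
  fix P
  assume P: "P \<in> LDer scale br k"
  then have "P = (\<lambda>x. \<Sum>i=1..r. \<Sum>j=1..r. block P i j x)"
    using sum_blocks by (auto simp: LDer_def)
  with P k show "P \<in> ?sums"
    using block_in_LDer_pair by blast
next
  fix f
  assume "f \<in> ?sums"
  then obtain F where F: "\<forall>i\<in>{1..r}. \<forall>j\<in>{1..r}. F i j \<in> LDer_pair scale br G r k i j"
    and f: "f = (\<lambda>x. \<Sum>i=1..r. \<Sum>j=1..r. F i j x)"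
    by blast
  have "\<forall>i\<in>{1..r}. (\<lambda>x. \<Sum>j=1..r. F i j x) \<in> LDer scale br k"
    using F LDer_pair_in_LDer by (intro ballI LDer_sum) auto
  then show "f \<in> LDer scale br k"
    unfolding f by (intro LDer_sum) auto
qed

end

theorem lemma3:
  fixes scale :: "'k::field_char_0 \<Rightarrow> 'v::ab_group_add \<Rightarrow> 'v"
    and br :: "'v \<Rightarrow> 'v \<Rightarrow> 'v"
    and G :: "nat \<Rightarrow> 'v set"
    and r k :: nat
  assumes "alg_closed TYPE('k)"
    and "fin_dim_vs scale"
    and "lie_algebra scale br"
    and "r \<ge> 1"
    and "k \<ge> 1"
    and "\<forall>i\<in>{1..r}. module.subspace scale (G i)"
    and "\<forall>i\<in>{1..r}. \<forall>x y. y \<in> G i \<longrightarrow> br x y \<in> G i"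
    and "\<forall>x. \<exists>y. (\<forall>i\<in>{1..r}. y i \<in> G i) \<and> x = (\<Sum>i=1..r. y i)"
    and "\<forall>y. (\<forall>i\<in>{1..r}. y i \<in> G i) \<and> (\<Sum>i=1..r. y i) = 0 \<longrightarrow> (\<forall>i\<in>{1..r}. y i = 0)"
  shows "LDer scale br k =
    {f. \<exists>F. (\<forall>i\<in>{1..r}. \<forall>j\<in>{1..r}. F i j \<in> LDer_pair scale br G r k i j)
           \<and> f = (\<lambda>x. \<Sum>i=1..r. \<Sum>j=1..r. F i j x)}"
proof -
  have "ideal_decomposition scale br G r"
    using assms(2,3,6-9)
    unfolding ideal_decomposition_def ideal_decomposition_axioms_def bilinear_bracket_def
      bilinear_bracket_axioms_def fin_dim_vs_def lie_algebra_def
    by blast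
  then show ?thesis
    using ideal_decomposition.LDer_decomposition assms(5) by blast
qed

end
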